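(* Let $g\ge1$ and $n\ge1$. For any $T\in\mathcal T_n$ there exists $\widehat T\in\mathcal T_n$ such that for every segment $[t,t')$ of $T$ (with $1\le t<t'\le n+1$): (i) $\hat w_n(\widehat T)>0$, $t$ and $t'$ are switch points of $\widehat T$ (where $t'=n+1$ is considered a switch point), and $\widehat T$ contains at most $l=\left\lceil\frac{\log(t'-t)}{\lfloor\log(g+1)\rfloor}\right\rceil+1$ segments in $[t,t')$; (ii) if the switch points of $\widehat T$ in $[t,t')$ are $t_1:=t<t_2<\cdots<t_{l'}$ and $t_{l'+1}:=t'$, then $l'\le l$, and for every nondecreasing function $f:[0,\infty)\to[0,\infty)$, \[ \sum_{i=1}^{l'}f(t_{i+1}-t_i)\le\sum_{i=0}^{l'-2}f\!\left(\frac{t'-t}{2^{i\lfloor\log(g+1)\rfloor}}\right)+f(t'-t) \le\int_0^{\frac{\log(t'-t)}{\lfloor\log(g+1)\rfloor}}f\!\left(\frac{t'-t}{2^{x\lfloor\log(g+1)\rfloor}}\right)dx+2f(t'-t), \] where the first sum on the right is empty if $l'=1$.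
   Context: $\log$ is base 2. $\mathcal T_n$ is the set of transition paths $T=(t_1,\ldots,t_C;n)$ with $C\ge0$ and $1<t_1<\cdots<t_C\le n$; with $t_0=1$, $t_{C+1}=n+1$, the segments of $T$ are $[t_c,t_{c+1})$, $c=0,\ldots,C$, and its switch points are $t_1,\ldots,t_C$. Weights: given switch probabilities $p(t|t')\in(0,1)$ for all $1\le t'<t$, let $U_1=1$ and $\Pr(U_t=t\mid U_{t-1}=t')=p(t|t')=1-\Pr(U_t=t'\mid U_{t-1}=t')$ define a Markov chain; a path $T\in\mathcal T_t$ corresponds to the realization jumping exactly at its switch points and $w_t(T)$ is its probability. Pruning with parameter $g$: write $s=o2^u$ with $o$ odd, $u\ge0$; $h_t(s)=1$ if $s\le t<s+g2^u$ and $0$ otherwise; $\hat p(t|t')=1-h_t(t')(1-p(t|t'))$; $\hat w_t$ is the Markov weight function defined from $\hat p$. *)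

theory Defs
  imports "HOL-Analysis.Analysis" "HOL-Computational_Algebra.Primes"
begin

text \<open>A transition path T = (t_1,...,t_C; n) is represented by its set of switch
  points S = {t_1,...,t_C}, a subset of {2..n}.\<close>
definition trans_paths :: "nat \<Rightarrow> nat set set" where
  "trans_paths n = {S. S \<subseteq> {2..n}}"

text \<open>Most recent jump time before s (U_{s-1} of the realization), with t_0 = 1.\<close>
definition last_switch :: "nat set \<Rightarrow> nat \<Rightarrow> nat" where
  "last_switch S s = Max (insert 1 {u \<in> S. u < s})"

text \<open>Markov weight w_t(T); p t t' stands for p(t|t').\<close>
definition markov_weight :: "(nat \<Rightarrow> nat \<Rightarrow> real) \<Rightarrow> nat \<Rightarrow> nat set \<Rightarrow> real" where
  "markov_weight p t S =
     (\<Prod>s\<in>{2..t}. if s \<in> S then p s (last_switch S s) else 1 - p s (last_switch S s))"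

definition h_prune :: "nat \<Rightarrow> nat \<Rightarrow> nat \<Rightarrow> real" where
  "h_prune g t s = (if s \<le> t \<and> t < s + g * 2 ^ multiplicity (2::nat) s then 1 else 0)"

definition pruned_p :: "nat \<Rightarrow> (nat \<Rightarrow> nat \<Rightarrow> real) \<Rightarrow> nat \<Rightarrow> nat \<Rightarrow> real" where
  "pruned_p g p t t' = 1 - h_prune g t t' * (1 - p t t')"

definition segments :: "nat \<Rightarrow> nat set \<Rightarrow> (nat \<times> nat) set" where
  "segments n S = {(a, b). a \<in> insert 1 S \<and> b \<in> insert (n + 1) S \<and> a < b \<and>
                          (\<forall>c\<in>S. \<not> (a < c \<and> c < b))}"

end

theory Submission
  imports Defs
begin

text \<open>Write \<open>v\<close> for the 2-adic valuation and \<open>k = \<lfloor>log (g + 1)\<rfloor>\<close>, so \<open>2^k - 1 \<le> g\<close>.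
  Inside a segment \<open>[t, t')\<close> of \<open>T\<close> keep the points \<open>t = c\<^sub>0 < c\<^sub>1 < \<dots> < c\<^sub>N\<close>, where
  \<open>c\<^sub>i\<^sub>+\<^sub>1\<close> is the least multiple of \<open>2^(v(c\<^sub>i) + k)\<close> above \<open>c\<^sub>i\<close>, stopping at the first \<open>c\<^sub>N\<close>
  whose window \<open>[c\<^sub>N, c\<^sub>N + (2^k - 1) 2^v(c\<^sub>N))\<close> reaches \<open>t'\<close>. Each \<open>c\<^sub>i\<^sub>+\<^sub>1\<close> lies in the
  window of \<open>c\<^sub>i\<close>, where \<open>h = 1\<close>, so every factor of the pruned weight is an original
  probability \<open>p\<close> or \<open>1 - p\<close> and the weight stays positive. The valuations grow by at
  least \<open>k\<close> per step, so \<open>c\<^sub>i\<^sub>+\<^sub>1 - c\<^sub>i \<le> 2^(-(N-1-i)k) (t' - t)\<close>; this bounds \<open>N\<close> by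
  \<open>log (t' - t) / k + 1\<close> and the gap sum by a geometric sum, which is compared with the
  integral of its antitone integrand.\<close>

definition next_aligned :: "nat \<Rightarrow> nat \<Rightarrow> nat" where
  "next_aligned k s = (s div 2 ^ (multiplicity 2 s + k) + 1) * 2 ^ (multiplicity 2 s + k)"

lemma less_next_aligned: "s < next_aligned k s"
proof -
  define M where "M = (2::nat) ^ (multiplicity 2 s + k)"
  have "s = M * (s div M) + s mod M" by simp
  moreover have "s mod M < M" by (simp add: M_def)
  moreover have "next_aligned k s = M * (s div M) + M" by (simp add: next_aligned_def M_def)
  ultimately show ?thesis by linarith
qed

lemma multiplicity_next_aligned: "multiplicity 2 s + k \<le> multiplicity (2::nat) (next_aligned k s)"
proof -
  have "next_aligned k s \<noteq> 0" using less_next_aligned[of s k] by simp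
  moreover have "2 ^ (multiplicity 2 s + k) dvd next_aligned k s" by (simp add: next_aligned_def)
  ultimately show ?thesis by (intro multiplicity_geI) auto
qed

lemma next_aligned_le:
  assumes "1 \<le> k" and "s \<noteq> 0"
  shows "next_aligned k s \<le> s + (2 ^ k - 1) * 2 ^ multiplicity (2::nat) s"
proof -
  define v where "v = multiplicity (2::nat) s"
  define M where "M = (2::nat) ^ (v + k)"
  have "2 ^ v dvd s" unfolding v_def by (rule multiplicity_dvd)
  moreover have "2 ^ v dvd M" unfolding M_def by (simp add: le_imp_power_dvd)
  ultimately have dvd_mod: "2 ^ v dvd s mod M" by (simp add: dvd_mod)
  have "\<not> M dvd s"
  proof
    assume "M dvd s"
    then have "v + k \<le> v" using assms unfolding M_def v_def by (intro multiplicity_geI) auto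
    then show False using assms by simp
  qed
  then have "2 ^ v \<le> s mod M" using dvd_mod by (meson dvd_imp_le mod_0_imp_dvd not_gr0)
  moreover have "s mod M < M" by (simp add: M_def)
  moreover have "next_aligned k s = s + (M - s mod M)"
  proof -
    have "s = M * (s div M) + s mod M" by simp
    moreover have "next_aligned k s = M * (s div M) + M" by (simp add: next_aligned_def M_def v_def)
    ultimately show ?thesis using \<open>s mod M < M\<close> by linarith
  qed
  moreover have "M = 2 ^ k * 2 ^ v" by (simp add: M_def power_add)
  ultimately show ?thesis unfolding v_def[symmetric] by (simp add: diff_mult_distrib)
qed

definition aligned_chain :: "nat \<Rightarrow> nat \<Rightarrow> nat \<Rightarrow> nat" where
  "aligned_chain k t i = (next_aligned k ^^ i) t"

lemma aligned_chain_0 [simp]: "aligned_chain k t 0 = t"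
  by (simp add: aligned_chain_def)

lemma aligned_chain_Suc: "aligned_chain k t (Suc i) = next_aligned k (aligned_chain k t i)"
  by (simp add: aligned_chain_def)

lemma strict_mono_aligned_chain: "strict_mono (aligned_chain k t)"
proof (rule strict_monoI)
  fix i j :: nat
  assume "i < j"
  then show "aligned_chain k t i < aligned_chain k t j"
    by (rule lift_Suc_mono_less[rotated]) (simp add: aligned_chain_Suc less_next_aligned)
qed

lemma aligned_chain_ge: "t + i \<le> aligned_chain k t i"
proof (induction i)
  case (Suc i)
  then show ?case using less_next_aligned[of "aligned_chain k t i" k] by (simp add: aligned_chain_Suc)
qed simp

lemma multiplicity_aligned_chain:
  assumes "i \<le> j"
  shows "multiplicity 2 (aligned_chain k t i) + (j - i) * k \<le> multiplicity (2::nat) (aligned_chain k t j)"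
  using assms
proof (induction j rule: dec_induct)
  case (step j)
  then show ?case
    using multiplicity_next_aligned[of "aligned_chain k t j" k]
    by (simp add: aligned_chain_Suc Suc_diff_le)
qed simp

text \<open>The window of \<open>s\<close> has length \<open>(2^k - 1) 2^v(s) \<le> g 2^v(s)\<close>, so it lies inside the
  range where \<open>h_t(s) = 1\<close>.\<close>

definition window_covers :: "nat \<Rightarrow> nat \<Rightarrow> nat \<Rightarrow> bool" where
  "window_covers k s t' \<longleftrightarrow> t' \<le> s + (2 ^ k - 1) * 2 ^ multiplicity (2::nat) s"

definition chain_length :: "nat \<Rightarrow> nat \<Rightarrow> nat \<Rightarrow> nat" where
  "chain_length k t t' = (LEAST i. window_covers k (aligned_chain k t i) t')"

definition chain_points :: "nat \<Rightarrow> nat \<Rightarrow> nat \<Rightarrow> nat set" where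
  "chain_points k t t' = aligned_chain k t ` {..chain_length k t t'}"

lemma window_covers_chain_length: "window_covers k (aligned_chain k t (chain_length k t t')) t'"
proof -
  have "window_covers k (aligned_chain k t t') t'"
    using aligned_chain_ge[of t t' k] by (simp add: window_covers_def)
  then show ?thesis unfolding chain_length_def by (rule LeastI)
qed

lemma not_window_covers_before_chain_length:
  "i < chain_length k t t' \<Longrightarrow> \<not> window_covers k (aligned_chain k t i) t'"
  unfolding chain_length_def by (rule not_less_Least)

lemma aligned_chain_less_end:
  assumes "1 \<le> k" "1 \<le> t" "t < t'" "i \<le> chain_length k t t'"
  shows "aligned_chain k t i < t'"
proof (cases i)
  case (Suc j)
  have "aligned_chain k t j \<noteq> 0" using aligned_chain_ge[of t j k] assms(2) by simp
  moreover have "\<not> window_covers k (aligned_chain k t j) t'"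
    using not_window_covers_before_chain_length assms(4) Suc by simp
  ultimately show ?thesis
    using next_aligned_le[OF assms(1)] unfolding window_covers_def Suc aligned_chain_Suc
    by (meson le_less_trans not_le)
qed (use assms in simp)

lemma chain_points_subset:
  assumes "1 \<le> k" "1 \<le> t" "t < t'"
  shows "chain_points k t t' \<subseteq> {t..<t'}"
proof
  fix x
  assume "x \<in> chain_points k t t'"
  then obtain i where "i \<le> chain_length k t t'" "x = aligned_chain k t i"
    unfolding chain_points_def by auto
  then show "x \<in> {t..<t'}"
    using aligned_chain_ge[of t i k] aligned_chain_less_end[OF assms] by auto
qed

lemma start_in_chain_points: "t \<in> chain_points k t t'"
  unfolding chain_points_def by (metis atMost_iff aligned_chain_0 imageI zero_le)

text \<open>The key estimate: the gap after \<open>c\<^sub>i\<close> is at most the window of \<open>c\<^sub>i\<close>, which is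
  \<open>2^((N-1-i) k)\<close> times smaller than the window of \<open>c\<^sub>N\<^sub>-\<^sub>1\<close>, and the latter does not reach \<open>t'\<close>.\<close>

lemma aligned_chain_gap:
  assumes "1 \<le> k" "1 \<le> t" "i < chain_length k t t'"
  shows "(aligned_chain k t (Suc i) - aligned_chain k t i) * 2 ^ ((chain_length k t t' - 1 - i) * k)
           < t' - t"
proof -
  define N where "N = chain_length k t t'"
  define c where "c = aligned_chain k t (N - 1)"
  define ci where "ci = aligned_chain k t i"
  have "ci \<noteq> 0" using aligned_chain_ge[of t i k] assms(2) by (simp add: ci_def)
  have "(aligned_chain k t (Suc i) - ci) * 2 ^ ((N - 1 - i) * k)
      \<le> (2 ^ k - 1) * 2 ^ multiplicity 2 ci * 2 ^ ((N - 1 - i) * k)"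
    using next_aligned_le[OF assms(1) \<open>ci \<noteq> 0\<close>] by (simp add: aligned_chain_Suc ci_def)
  also have "\<dots> = (2 ^ k - 1) * 2 ^ (multiplicity 2 ci + (N - 1 - i) * k)"
    by (simp add: power_add)
  also have "\<dots> \<le> (2 ^ k - 1) * 2 ^ multiplicity 2 c"
    using multiplicity_aligned_chain[of i "N - 1" k t] assms(3)
    by (intro mult_left_mono power_increasing) (auto simp: N_def c_def ci_def)
  also have "\<dots> < t' - c"
    using not_window_covers_before_chain_length[of "N - 1" k t t'] assms(3)
    unfolding window_covers_def c_def N_def by linarith
  also have "\<dots> \<le> t' - t" using aligned_chain_ge[of t "N - 1" k] by (simp add: c_def)
  finally show ?thesis unfolding N_def ci_def .
qed

lemma two_powr_of_nat_mult: "(2::real) powr (real m * real k) = real ((2::nat) ^ (m * k))"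
  by (simp add: powr_realpow flip: of_nat_mult)

lemma chain_length_lt_log:
  assumes "1 \<le> k" "1 \<le> t" "t < t'"
  shows "real (chain_length k t t') < log 2 (real t' - real t) / real k + 1"
proof (cases "chain_length k t t' = 0")
  case True
  have "0 \<le> log 2 (real t' - real t) / real k" using assms(3) by simp
  then show ?thesis using True by simp
next
  case False
  define N where "N = chain_length k t t'"
  have "aligned_chain k t 0 < aligned_chain k t 1"
    using strict_mono_aligned_chain by (rule strict_monoD) simp
  then have "2 ^ ((N - 1) * k) \<le> (aligned_chain k t 1 - aligned_chain k t 0) * 2 ^ ((N - 1) * k)"
    by simp
  also have "\<dots> < t' - t" using aligned_chain_gap[OF assms(1,2), of 0 t'] False by (simp add: N_def)
  finally have "2 powr (real (N - 1) * real k) < real t' - real t"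
    unfolding two_powr_of_nat_mult using assms(3) by linarith
  then have "real (N - 1) * real k < log 2 (real t' - real t)"
    using assms(3) by (subst less_log_iff) auto
  moreover have "0 < real k" using assms(1) by simp
  ultimately have "real (N - 1) < log 2 (real t' - real t) / real k" by (simp add: pos_less_divide_eq)
  then show ?thesis using False by (simp add: N_def of_nat_diff)
qed

lemma aligned_chain_gap_le:
  assumes "1 \<le> k" "1 \<le> t" "i < chain_length k t t'"
  shows "real (aligned_chain k t (Suc i)) - real (aligned_chain k t i)
           \<le> (real t' - real t) / 2 powr (real (chain_length k t t' - Suc i) * real k)"
proof -
  define d where "d = aligned_chain k t (Suc i) - aligned_chain k t i"
  define P where "P = (2::nat) ^ ((chain_length k t t' - Suc i) * k)"
  have "d * P < t' - t" using aligned_chain_gap[OF assms] by (simp add: d_def P_def)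
  then have "t < t'" by simp
  have "real (d * P) < real (t' - t)" using \<open>d * P < t' - t\<close> by (simp only: of_nat_less_iff)
  then have "real d * real P < real t' - real t" using \<open>t < t'\<close> by (simp add: of_nat_diff)
  moreover have "0 < real P" by (simp add: P_def)
  ultimately have "real d \<le> (real t' - real t) / real P" by (simp add: pos_le_divide_eq)
  moreover have "aligned_chain k t i < aligned_chain k t (Suc i)"
    using strict_mono_aligned_chain by (rule strict_monoD) simp
  then have "real d = real (aligned_chain k t (Suc i)) - real (aligned_chain k t i)"
    by (simp add: d_def of_nat_diff)
  ultimately show ?thesis by (simp only: P_def two_powr_of_nat_mult)
qed

lemma integrable_on_antimono_on:
  fixes f :: "real \<Rightarrow> real"
  assumes "antimono_on {a..b} f"
  shows "f integrable_on {a..b}"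
proof -
  have "mono_on {a..b} (\<lambda>x. - f x)" using assms by (simp add: monotone_on_def)
  then have "(\<lambda>x. - f x) integrable_on {a..b}" by (rule integrable_on_mono_on)
  then show ?thesis using integrable_neg by fastforce
qed

lemma sum_le_integral_antimono:
  fixes F :: "real \<Rightarrow> real"
  assumes anti: "antimono_on {0..} F"
  shows "(\<Sum>i=1..m. F (real i)) \<le> integral {0..real m} F"
proof (induction m)
  case (Suc m)
  have int: "F integrable_on {0..b}" for b
    by (rule integrable_on_antimono_on, rule monotone_on_subset[OF anti]) auto
  have "F (real (Suc m)) = integral {real m..real (Suc m)} (\<lambda>_. F (real (Suc m)))" by simp
  also have "\<dots> \<le> integral {real m..real (Suc m)} F"
    using anti integrable_subinterval_real[OF int[of "real (Suc m)"]]
    by (intro integral_le) (auto simp: monotone_on_def)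
  finally have "(\<Sum>i=1..Suc m. F (real i)) \<le> integral {0..real m} F + integral {real m..real (Suc m)} F"
    using Suc.IH by simp
  also have "\<dots> = integral {0..real (Suc m)} F"
    by (rule Henstock_Kurzweil_Integration.integral_combine[OF _ _ int]) auto
  finally show ?case .
qed simp

lemma sum_powr_le_integral:
  fixes f :: "real \<Rightarrow> real" and d \<kappa> :: real
  assumes f: "mono_on {0..} f" "\<forall>x\<ge>0. 0 \<le> f x" and d: "1 \<le> d" and \<kappa>: "0 < \<kappa>"
    and N: "real N < log 2 d / \<kappa> + 1"
  shows "(\<Sum>i<N. f (d / 2 powr (real i * \<kappa>))) + f d
           \<le> integral {0..log 2 d / \<kappa>} (\<lambda>x. f (d / 2 powr (x * \<kappa>))) + 2 * f d"
proof -
  define F where "F x = f (d / 2 powr (x * \<kappa>))" for x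
  define X where "X = log 2 d / \<kappa>"
  have anti: "antimono_on {0..} F"
    unfolding monotone_on_def F_def using d \<kappa>
    by (auto intro!: mono_onD[OF f(1)] divide_left_mono mult_pos_pos simp: mult_right_mono)
  have F_nonneg: "0 \<le> F x" for x unfolding F_def using f(2) d by simp
  have int: "F integrable_on {0..X}"
    by (rule integrable_on_antimono_on, rule monotone_on_subset[OF anti]) auto
  have "(\<Sum>i<N. F (real i)) \<le> integral {0..X} F + f d"
  proof (cases N)
    case 0
    have "0 \<le> integral {0..X} F" using int F_nonneg by (intro integral_nonneg) auto
    then show ?thesis using 0 f(2) d by simp
  next
    case (Suc M)
    have "(\<Sum>i<N. F (real i)) = F 0 + (\<Sum>i=1..M. F (real i))"
      unfolding Suc sum.lessThan_Suc_shift by (simp add: sum.atLeast1_atMost_eq)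
    also have "F 0 = f d" by (simp add: F_def)
    also have "(\<Sum>i=1..M. F (real i)) \<le> integral {0..real M} F"
      using anti by (rule sum_le_integral_antimono)
    also have "\<dots> \<le> integral {0..X} F"
      using N int F_nonneg unfolding Suc X_def
      by (intro integral_subset_le integrable_on_antimono_on monotone_on_subset[OF anti]) auto
    finally show ?thesis by simp
  qed
  then show ?thesis unfolding F_def X_def by simp
qed

lemma sum_chain_gaps_le:
  fixes f :: "real \<Rightarrow> real"
  assumes k: "1 \<le> k" and t: "1 \<le> t" "t < t'" and f: "mono_on {0..} f"
  defines "N \<equiv> chain_length k t t'"
  defines "xs \<equiv> map (aligned_chain k t) [0..<Suc N] @ [t']"
  shows "(\<Sum>i<Suc N. f (real (xs ! Suc i) - real (xs ! i)))
           \<le> (\<Sum>i<N. f ((real t' - real t) / 2 powr (real i * real k))) + f (real t' - real t)"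
proof -
  let ?c = "\<lambda>i. real (aligned_chain k t i)"
  let ?d = "real t' - real t"
  have chain_mono: "aligned_chain k t i \<le> aligned_chain k t (Suc i)" for i
    using strict_mono_aligned_chain[of k t] by (simp add: strict_mono_Suc_iff less_imp_le)
  have xs_nth: "xs ! i = aligned_chain k t i" if "i \<le> N" for i
    using that by (simp add: xs_def nth_append less_Suc_eq_le)
  have xs_last: "xs ! Suc N = t'" by (simp add: xs_def nth_append)
  have "(\<Sum>i<Suc N. f (real (xs ! Suc i) - real (xs ! i)))
      = (\<Sum>i<N. f (?c (Suc i) - ?c i)) + f (real t' - ?c N)"
    by (simp add: xs_nth xs_last)
  also have "(\<Sum>i<N. f (?c (Suc i) - ?c i)) \<le> (\<Sum>i<N. f (?d / 2 powr (real (N - Suc i) * real k)))"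
  proof (rule sum_mono)
    fix i
    assume "i \<in> {..<N}"
    then have "?c (Suc i) - ?c i \<le> ?d / 2 powr (real (N - Suc i) * real k)"
      using aligned_chain_gap_le[OF k t(1)] by (simp add: N_def)
    then show "f (?c (Suc i) - ?c i) \<le> f (?d / 2 powr (real (N - Suc i) * real k))"
      using chain_mono[of i] by (intro mono_onD[OF f]) auto
  qed
  also have "\<dots> = (\<Sum>i<N. f (?d / 2 powr (real i * real k)))"
    by (rule sum.nat_diff_reindex)
  also have "f (real t' - ?c N) \<le> f ?d"
    using aligned_chain_ge[of t N k] aligned_chain_less_end[OF k t, of N]
    by (intro mono_onD[OF f]) (auto simp: N_def)
  finally show ?thesis by simp
qed

lemma last_switch_in: "finite S \<Longrightarrow> last_switch S s \<in> insert 1 {u \<in> S. u < s}"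
  unfolding last_switch_def by (rule Max_in) auto

lemma le_last_switch: "finite S \<Longrightarrow> u \<in> insert 1 {u \<in> S. u < s} \<Longrightarrow> u \<le> last_switch S s"
  unfolding last_switch_def by (rule Max_ge) auto

lemma segments_bounds:
  assumes "T \<subseteq> {2..n}" "(a, b) \<in> segments n T"
  shows "1 \<le> a" "a < b" "b \<le> n + 1"
  using assms unfolding segments_def by auto

lemma segments_unique:
  assumes T: "T \<subseteq> {2..n}" and seg: "(a, b) \<in> segments n T" "(a', b') \<in> segments n T"
    and x: "a \<le> x" "x < b" "a' \<le> x" "x < b'"
  shows "a = a' \<and> b = b'"
proof -
  have "\<not> a < a' \<and> \<not> b < b'"
    if "(a, b) \<in> segments n T" "(a', b') \<in> segments n T" "a' < b" for a b a' b'
    using that T unfolding segments_def by fastforce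
  from this[OF seg] this[OF seg(2,1)] x show ?thesis by auto
qed

lemma segment_containing:
  assumes T: "T \<subseteq> {2..n}" and x: "1 \<le> x" "x \<le> n"
  obtains a b where "(a, b) \<in> segments n T" "a \<le> x" "x < b"
proof -
  have fin: "finite T" using T finite_subset by blast
  define A where "A = insert 1 {u \<in> T. u \<le> x}"
  define B where "B = insert (n + 1) {u \<in> T. x < u}"
  have "finite A" "finite B" using fin by (simp_all add: A_def B_def)
  have "Max A \<in> A" using \<open>finite A\<close> by (rule Max_in) (simp add: A_def)
  have "Min B \<in> B" using \<open>finite B\<close> by (rule Min_in) (simp add: B_def)
  then have "Max A \<le> x" "x < Min B" using x \<open>Max A \<in> A\<close> by (auto simp: A_def B_def)
  moreover have "\<not> (Max A < c \<and> c < Min B)" if "c \<in> T" for c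
    using that Max_ge[OF \<open>finite A\<close>, of c] Min_le[OF \<open>finite B\<close>, of c]
    by (cases "c \<le> x") (auto simp: A_def B_def)
  ultimately have "(Max A, Min B) \<in> segments n T"
    using \<open>Max A \<in> A\<close> \<open>Min B \<in> B\<close> unfolding segments_def A_def B_def by auto
  then show ?thesis using that \<open>Max A \<le> x\<close> \<open>x < Min B\<close> by blast
qed

text \<open>The chain of the first segment starts at time \<open>1\<close>, which is not a switch point.\<close>

definition pruned_path :: "nat \<Rightarrow> nat \<Rightarrow> nat set \<Rightarrow> nat set" where
  "pruned_path k n T = (\<Union>(a, b)\<in>segments n T. chain_points k a b) - {1}"

lemma pruned_path_subset:
  assumes "1 \<le> k" "T \<subseteq> {2..n}"
  shows "pruned_path k n T \<subseteq> {2..n}"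
proof
  fix x
  assume "x \<in> pruned_path k n T"
  then obtain a b where ab: "(a, b) \<in> segments n T" "x \<in> chain_points k a b" "x \<noteq> 1"
    unfolding pruned_path_def by auto
  note bounds = segments_bounds[OF assms(2) ab(1)]
  have "x \<in> {a..<b}" using chain_points_subset[OF assms(1) bounds(1,2)] ab(2) by auto
  then show "x \<in> {2..n}" using bounds ab(3) by auto
qed

lemma subset_pruned_path:
  assumes T: "T \<subseteq> {2..n}"
  shows "T \<subseteq> pruned_path k n T"
proof
  fix u
  assume "u \<in> T"
  then have "1 \<le> u" "u \<le> n" using T by auto
  then obtain a b where ab: "(a, b) \<in> segments n T" "a \<le> u" "u < b"
    by (rule segment_containing[OF T])
  have "a = u" using ab \<open>u \<in> T\<close> unfolding segments_def by (cases "a < u") auto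
  then show "u \<in> pruned_path k n T"
    using ab(1) start_in_chain_points[of u k b] \<open>u \<in> T\<close> T unfolding pruned_path_def by force
qed

lemma pruned_path_inter_segment:
  assumes k: "1 \<le> k" and T: "T \<subseteq> {2..n}" and seg: "(t, t') \<in> segments n T"
  shows "insert 1 (pruned_path k n T) \<inter> {t..<t'} = chain_points k t t'"
proof
  note bounds = segments_bounds[OF T seg]
  show "chain_points k t t' \<subseteq> insert 1 (pruned_path k n T) \<inter> {t..<t'}"
    using chain_points_subset[OF k bounds(1,2)] seg unfolding pruned_path_def by blast
  show "insert 1 (pruned_path k n T) \<inter> {t..<t'} \<subseteq> chain_points k t t'"
  proof
    fix x
    assume x: "x \<in> insert 1 (pruned_path k n T) \<inter> {t..<t'}"
    show "x \<in> chain_points k t t'"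
    proof (cases "x = 1")
      case True
      then show ?thesis using x bounds start_in_chain_points[of t k t'] by auto
    next
      case False
      then obtain a b where ab: "(a, b) \<in> segments n T" "x \<in> chain_points k a b"
        using x unfolding pruned_path_def by auto
      have "x \<in> {a..<b}"
        using chain_points_subset[OF k segments_bounds(1,2)[OF T ab(1)]] ab(2) by auto
      then have "a = t \<and> b = t'" using segments_unique[OF T ab(1) seg, of x] x by auto
      then show ?thesis using ab by simp
    qed
  qed
qed

text \<open>Either the next chain point lies beyond \<open>s\<close>, or the chain has stopped because its last
  window reaches the end of the segment.\<close>

lemma pruned_path_in_window:
  assumes k: "1 \<le> k" and T: "T \<subseteq> {2..n}" and s: "s \<in> {2..n}" "s \<notin> pruned_path k n T"
  defines "a \<equiv> last_switch (pruned_path k n T) s"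
  shows "s < a + (2 ^ k - 1) * 2 ^ multiplicity (2::nat) a"
proof -
  define P where "P = pruned_path k n T"
  have "finite P" using pruned_path_subset[OF k T] finite_subset unfolding P_def by blast
  have a: "a \<in> insert 1 {u \<in> P. u < s}" using last_switch_in[OF \<open>finite P\<close>] by (simp add: a_def P_def)
  have le_a: "u \<le> a" if "u \<in> insert 1 P" "u < s" for u
    using le_last_switch[OF \<open>finite P\<close>] that by (auto simp: a_def P_def)
  obtain t t' where seg: "(t, t') \<in> segments n T" "t \<le> s" "s < t'"
    using segment_containing[OF T, of s] s by auto
  note inter = pruned_path_inter_segment[OF k T seg(1), folded P_def]
  have "t \<in> insert 1 P" using inter start_in_chain_points[of t k t'] by blast
  then have "t \<noteq> s" using s(2) s(1) unfolding P_def by auto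
  then have "t \<le> a" using le_a \<open>t \<in> insert 1 P\<close> seg(2) by simp
  have "a \<noteq> 0" using \<open>t \<le> a\<close> segments_bounds(1)[OF T seg(1)] by simp
  have "a \<in> insert 1 P \<inter> {t..<t'}" using a \<open>t \<le> a\<close> seg(3) s(1) by auto
  then have "a \<in> chain_points k t t'" using inter by (simp only:)
  then obtain i where i: "i \<le> chain_length k t t'" "a = aligned_chain k t i"
    unfolding chain_points_def by auto
  show ?thesis
  proof (cases "i < chain_length k t t'")
    case True
    define c where "c = aligned_chain k t (Suc i)"
    have "c \<in> chain_points k t t'" using True unfolding c_def chain_points_def by auto
    then have "c \<in> insert 1 P" using inter by blast
    have "a < c" using strict_mono_aligned_chain by (simp add: c_def i(2) strict_mono_less)
    have "c \<noteq> s" using \<open>c \<in> insert 1 P\<close> s unfolding P_def by auto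
    moreover have "\<not> c < s" using le_a[OF \<open>c \<in> insert 1 P\<close>] \<open>a < c\<close> by auto
    ultimately have "s < c" by simp
    also have "c \<le> a + (2 ^ k - 1) * 2 ^ multiplicity 2 a"
      unfolding c_def aligned_chain_Suc i(2)[symmetric] using next_aligned_le[OF k \<open>a \<noteq> 0\<close>] .
    finally show ?thesis .
  next
    case False
    then have "window_covers k a t'" using window_covers_chain_length i by (simp add: le_antisym)
    then show ?thesis using seg(3) unfolding window_covers_def by simp
  qed
qed

lemma markov_weight_pruned_path_pos:
  fixes p :: "nat \<Rightarrow> nat \<Rightarrow> real"
  assumes p: "\<And>t t'. 1 \<le> t' \<Longrightarrow> t' < t \<Longrightarrow> 0 < p t t' \<and> p t t' < 1"
    and k: "1 \<le> k" "2 ^ k \<le> g + 1" and T: "T \<subseteq> {2..n}"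
  shows "0 < markov_weight (pruned_p g p) n (pruned_path k n T)"
  unfolding markov_weight_def
proof (rule prod_pos)
  fix s
  assume s: "s \<in> {2..n}"
  define P where "P = pruned_path k n T"
  define a where "a = last_switch P s"
  have "P \<subseteq> {2..n}" using pruned_path_subset[OF k(1) T] by (simp add: P_def)
  then have "finite P" using finite_subset by blast
  then have "1 \<le> a" "a < s" using last_switch_in[of P s] s \<open>P \<subseteq> {2..n}\<close> by (auto simp: a_def)
  then have p_a: "0 < p s a" "p s a < 1" using p by auto
  have "0 < (if s \<in> P then pruned_p g p s a else 1 - pruned_p g p s a)"
  proof (cases "s \<in> P")
    case True
    then show ?thesis using p_a unfolding pruned_p_def h_prune_def by auto
  next
    case False
    have "s < a + (2 ^ k - 1) * 2 ^ multiplicity 2 a"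
      using pruned_path_in_window[OF k(1) T s] False by (simp add: a_def P_def)
    also have "\<dots> \<le> a + g * 2 ^ multiplicity 2 a" using k(2) by simp
    finally have "h_prune g s a = 1" using \<open>a < s\<close> unfolding h_prune_def by simp
    then show ?thesis using False p_a unfolding pruned_p_def by simp
  qed
  then show "0 < (if s \<in> pruned_path k n T then pruned_p g p s (last_switch (pruned_path k n T) s)
                  else 1 - pruned_p g p s (last_switch (pruned_path k n T) s))"
    unfolding a_def P_def .
qed

lemma sorted_list_of_chain_points:
  "sorted_list_of_set (chain_points k t t') = map (aligned_chain k t) [0..<Suc (chain_length k t t')]"
proof (rule strict_sorted_equal)
  show "sorted_wrt (<) (map (aligned_chain k t) [0..<Suc (chain_length k t t')])"
    unfolding sorted_wrt_map using strict_mono_aligned_chain[of k t]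
    by (intro sorted_wrt_mono_rel[OF _ sorted_wrt_upt]) (auto simp: strict_mono_less)
  show "set (sorted_list_of_set (chain_points k t t')) = set (map (aligned_chain k t) [0..<Suc (chain_length k t t')])"
    by (simp add: chain_points_def atLeast0LessThan lessThan_Suc_atMost del: upt_Suc)
qed simp

lemma pruned_path_segment:
  assumes k: "1 \<le> k" and T: "T \<subseteq> {2..n}" and seg: "(t, t') \<in> segments n T"
  defines "P \<equiv> pruned_path k n T" and "d \<equiv> real t' - real t"
  defines "l \<equiv> \<lceil>log 2 d / real k\<rceil> + 1"
    and "ts \<equiv> sorted_list_of_set (insert 1 P \<inter> {t..<t'})"
  defines "xs \<equiv> ts @ [t']"
  shows "t \<in> insert 1 P \<and> t' \<in> insert (n + 1) P \<and>
    int (card (insert 1 P \<inter> {t..<t'})) \<le> l \<and> hd ts = t \<and> int (length ts) \<le> l \<and>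
    (\<forall>f :: real \<Rightarrow> real. mono_on {0..} f \<longrightarrow> (\<forall>x\<ge>0. f x \<ge> 0) \<longrightarrow>
       (\<Sum>i<length ts. f (real (xs ! Suc i) - real (xs ! i)))
         \<le> (\<Sum>i<length ts - 1. f (d / 2 powr (real i * real k))) + f d
     \<and> (\<Sum>i<length ts - 1. f (d / 2 powr (real i * real k))) + f d
         \<le> integral {0..log 2 d / real k} (\<lambda>x. f (d / 2 powr (x * real k))) + 2 * f d)"
proof -
  define N where "N = chain_length k t t'"
  note bounds = segments_bounds[OF T seg]
  have ts: "ts = map (aligned_chain k t) [0..<Suc N]"
    unfolding ts_def P_def pruned_path_inter_segment[OF k T seg] N_def
    by (rule sorted_list_of_chain_points)
  have card: "card (insert 1 P \<inter> {t..<t'}) = length ts"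
    unfolding ts_def by simp
  have "real N < log 2 d / real k + 1"
    using chain_length_lt_log[OF k bounds(1,2)] by (simp add: N_def d_def)
  then have "int (Suc N) \<le> l" unfolding l_def by linarith
  moreover have "t \<in> insert 1 P \<and> t' \<in> insert (n + 1) P"
    using seg subset_pruned_path[OF T] unfolding segments_def P_def by blast
  moreover have "hd ts = t" unfolding ts by (simp del: upt_Suc add: upt_conv_Cons)
  moreover have "mono_on {0..} f \<Longrightarrow> \<forall>x\<ge>0. 0 \<le> f x \<Longrightarrow>
       (\<Sum>i<Suc N. f (real (xs ! Suc i) - real (xs ! i)))
         \<le> (\<Sum>i<N. f (d / 2 powr (real i * real k))) + f d
     \<and> (\<Sum>i<N. f (d / 2 powr (real i * real k))) + f d
         \<le> integral {0..log 2 d / real k} (\<lambda>x. f (d / 2 powr (x * real k))) + 2 * f d"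
    for f :: "real \<Rightarrow> real"
    using sum_chain_gaps_le[OF k bounds(1,2)] sum_powr_le_integral[of f d "real k" N] bounds k
      \<open>real N < log 2 d / real k + 1\<close>
    unfolding xs_def ts d_def N_def by auto
  ultimately show ?thesis using card by (simp add: ts)
qed

lemma floor_log2_Suc_natE:
  assumes "1 \<le> g"
  obtains k :: nat where "real_of_int \<lfloor>log 2 (real g + 1)\<rfloor> = real k" "1 \<le> k" "2 ^ k \<le> g + 1"
proof
  define k where "k = nat \<lfloor>log 2 (real g + 1)\<rfloor>"
  have "1 \<le> log 2 (real g + 1)" using assms by simp
  then show k_eq: "real_of_int \<lfloor>log 2 (real g + 1)\<rfloor> = real k" and "1 \<le> k"
    unfolding k_def by linarith+
  have "real k \<le> log 2 (real g + 1)" using k_eq of_int_floor_le by metis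
  then have "2 powr real k \<le> real g + 1" by (subst (asm) le_log_iff) auto
  then have "real (2 ^ k) \<le> real (g + 1)" by (simp add: powr_realpow)
  then show "2 ^ k \<le> g + 1" by (simp only: of_nat_le_iff)
qed

theorem lemma3:
  fixes p :: "nat \<Rightarrow> nat \<Rightarrow> real" and g n :: nat and T :: "nat set"
  assumes p_range: "\<And>t t'. 1 \<le> t' \<Longrightarrow> t' < t \<Longrightarrow> 0 < p t t' \<and> p t t' < 1"
    and g: "g \<ge> 1" and n: "n \<ge> 1"
    and T: "T \<in> trans_paths n"
  shows "\<exists>T' \<in> trans_paths n. \<forall>(t, t') \<in> segments n T.
    (let k = real_of_int \<lfloor>log 2 (real g + 1)\<rfloor>;
         l = \<lceil>log 2 (real t' - real t) / k\<rceil> + 1;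
         ts = sorted_list_of_set (insert 1 T' \<inter> {t..<t'});
         l' = length ts;
         xs = ts @ [t']
     in markov_weight (pruned_p g p) n T' > 0 \<and>
        t \<in> insert 1 T' \<and> t' \<in> insert (n + 1) T' \<and>
        int (card (insert 1 T' \<inter> {t..<t'})) \<le> l \<and>
        hd ts = t \<and> int l' \<le> l \<and>
        (\<forall>f :: real \<Rightarrow> real. mono_on {0..} f \<longrightarrow> (\<forall>x\<ge>0. f x \<ge> 0) \<longrightarrow>
           (\<Sum>i<l'. f (real (xs ! Suc i) - real (xs ! i)))
             \<le> (\<Sum>i<l' - 1. f ((real t' - real t) / 2 powr (real i * k))) + f (real t' - real t)
         \<and> (\<Sum>i<l' - 1. f ((real t' - real t) / 2 powr (real i * k))) + f (real t' - real t)
             \<le> integral {0..log 2 (real t' - real t) / k}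
                  (\<lambda>x. f ((real t' - real t) / 2 powr (x * k))) + 2 * f (real t' - real t)))"
proof -
  obtain k where k_eq: "real_of_int \<lfloor>log 2 (real g + 1)\<rfloor> = real k" and k: "1 \<le> k" "2 ^ k \<le> g + 1"
    using floor_log2_Suc_natE[OF g] .
  have T_sub: "T \<subseteq> {2..n}" using T by (simp add: trans_paths_def)
  have weight: "0 < markov_weight (pruned_p g p) n (pruned_path k n T)"
    using markov_weight_pruned_path_pos[OF p_range k T_sub] .
  show ?thesis
    unfolding Let_def k_eq
  proof (rule bexI[where x = "pruned_path k n T"])
    show "pruned_path k n T \<in> trans_paths n"
      using pruned_path_subset[OF k(1) T_sub] by (simp add: trans_paths_def)
  qed (use weight pruned_path_segment[OF k(1) T_sub] in fast)
qed

end
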